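(* Let $r\geq 2$ and $d\geq 2$ be integers, let $\mathbf a=(a_1,\ldots,a_r)$ be a sequence of positive integers, and let $D(d)=\operatorname{lcm}(da_1,\ldots,da_r)$. For an integer $n\geq 0$ let $\mathbf p_{\mathbf a,d}(n)$ denote the number of integer tuples $(x_1,\ldots,x_r)$ with $\sum_{i=1}^r a_ix_i=n$, $x_i\geq 0$ and $x_i\equiv 0$ or $x_i\equiv 1\pmod d$ for all $i$. Then for all $n\geq 0$, $$\mathbf p_{\mathbf a,d}(n)=\frac{1}{(r-1)!}\sum_{\varepsilon\in\{0,1\}^r}\ \sum_{\substack{0\leq j_i\leq \frac{D(d)}{da_i}-1,\ 1\leq i\leq r\\ \sum_{i=1}^r a_i(dj_i+\varepsilon_i)\equiv n \pmod{D(d)}}}\ \prod_{\ell=1}^{r-1}\left(\frac{n-\sum_{i=1}^r a_i(dj_i+\varepsilon_i)}{D(d)}+\ell\right),$$ where $\varepsilon=(\varepsilon_1,\ldots,\varepsilon_r)$. Moreover, the polynomial part of $\mathbf p_{\mathbf a,d}$ is $$P_{\mathbf a,d}(n)=\frac{1}{D(d)(r-1)!}\sum_{\substack{\varepsilon\in\{0,1\}^r\\ 0\leq j_i\leq \frac{D(d)}{da_i}-1,\ 1\leq i\leq r}}\ \prod_{\ell=1}^{r-1}\left(\frac{n-\sum_{i=1}^r a_i(dj_i+\varepsilon_i)}{D(d)}+\ell\right).$$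
   Context: The polynomial part $P_{\mathbf a,d}(n)$ of $\mathbf p_{\mathbf a,d}$ is the polynomial in $n$ given by the coefficient of $t^{-1}$ in the Laurent expansion at $t=0$ of $e^{nt}\prod_{i=1}^r\dfrac{1+e^{-a_it}}{1-e^{-da_it}}$ (equivalently, the sum over $J\subseteq\{1,\ldots,r\}$ of Sylvester's first waves $P_{d\mathbf a}(n-\sum_{i\in J}a_i)$ of the restricted partition function with parts $da_1,\ldots,da_r$). *)

theory Defs
  imports "HOL-Analysis.Analysis" "HOL-Computational_Algebra.Formal_Laurent_Series"
    "HOL-Number_Theory.Cong"
begin

text \<open>The sequence a = (a_1,...,a_r) is represented by a function on indices 0..r-1.\<close>

definition pad :: "nat \<Rightarrow> (nat \<Rightarrow> nat) \<Rightarrow> nat \<Rightarrow> nat \<Rightarrow> nat" where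
  "pad r a d n = card {x \<in> PiE {..<r} (\<lambda>_. UNIV :: nat set).
       (\<Sum>i<r. a i * x i) = n \<and> (\<forall>i<r. x i mod d = 0 \<or> x i mod d = 1)}"

definition Dd :: "nat \<Rightarrow> (nat \<Rightarrow> nat) \<Rightarrow> nat \<Rightarrow> nat" where
  "Dd r a d = Lcm ((\<lambda>i. d * a i) ` {..<r})"

definition polypart :: "nat \<Rightarrow> (nat \<Rightarrow> nat) \<Rightarrow> nat \<Rightarrow> real \<Rightarrow> real" where
  "polypart r a d x = fls_nth
     (fps_to_fls (fps_exp x) *
      (\<Prod>i<r. fps_to_fls (1 + fps_exp (- real (a i))) /
               fps_to_fls (1 - fps_exp (- real (d * a i))))) (-1)"

end

theory Submission
  imports Defs
begin

(* Put M_i = D / (d a_i) for a positive common multiple D of the d a_i (nothing below needs D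
   to be the least one). Every x >= 0 with x mod d in {0, 1} is uniquely
   x = d (M_i q + j) + e with e in {0, 1}, 0 <= j < M_i and q >= 0, and then
   sum a_i x_i = D sum q_i + s(e, j) with s(e, j) = sum a_i (d j_i + e_i) < r D.
   So each pair (e, j) contributes the number of q in N^r with sum q_i = (n - s) / D, a binomial
   coefficient equal to the product in the formula; when s = n (mod D) but s > n, the quotient
   lies in [-(r - 1), -1] and the product vanishes.

   For the polynomial part, a geometric sum turns each factor (1 + e^(-a t)) / (1 - e^(-d a t))
   into sum_(e, j) e^(-a (d j + e) t) / (1 - e^(-D t)), so everything reduces to the residue
   G_k(c) of e^(c t) (1 - e^(-D t))^(-k). A derivative has no residue; differentiating
   e^(c t) (1 - e^(-D t))^(-k) gives c G_k(c) = k D G_(k+1)(c - D), and induction from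
   G_1 = 1 / D yields G_(m+1)(c) = pochhammer (c / D + 1) m / (D m!). *)

section \<open>Residues of exponential quotients\<close>

definition fls_exp :: "'a::field_char_0 \<Rightarrow> 'a fls" where
  "fls_exp c = fps_to_fls (fps_exp c)"

lemma fls_exp_zero [simp]: "fls_exp 0 = 1"
  by (simp add: fls_exp_def)

lemma fls_exp_add: "fls_exp (b + c) = fls_exp b * fls_exp c"
  by (simp add: fls_exp_def fps_exp_add_mult fls_times_fps_to_fls)

lemma fls_exp_sum: "(\<Prod>i\<in>A. fls_exp (f i)) = fls_exp (\<Sum>i\<in>A. f i)"
  by (induction A rule: infinite_finite_induct) (simp_all add: fls_exp_add)

lemma fls_exp_power: "fls_exp c ^ n = fls_exp (of_nat n * c)"
  by (simp add: fls_exp_def fps_exp_power_mult flip: fps_to_fls_power)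

lemma fls_deriv_fls_exp: "fls_deriv (fls_exp c) = fls_const c * fls_exp c"
  by (simp add: fls_exp_def fls_deriv_fps_to_fls fls_times_fps_to_fls flip: fps_const_to_fls)

lemma fls_subdegree_fls_exp [simp]: "fls_subdegree (fls_exp c) = 0"
  by (simp add: fls_exp_def fls_subdegree_fls_to_fps subdegree_eq_0)

lemma fls_subdegree_one_minus_fls_exp:
  assumes "c \<noteq> 0"
  shows "fls_subdegree (1 - fls_exp (- c)) = 1"
  using assms by (intro fls_subdegree_eqI) (auto simp: fls_exp_def)

definition exp_pole_residue :: "'a::field_char_0 \<Rightarrow> nat \<Rightarrow> 'a \<Rightarrow> 'a" where
  "exp_pole_residue D k c = fls_nth (fls_exp c * inverse (1 - fls_exp (- D)) ^ k) (-1)"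

lemma exp_pole_residue_1:
  assumes "D \<noteq> 0"
  shows "exp_pole_residue D 1 c = 1 / D"
proof -
  let ?B = "1 - fls_exp (- D)"
  have "fls_subdegree ?B = 1" "fls_nth ?B 1 = D"
    using fls_subdegree_one_minus_fls_exp[OF assms] by (simp_all add: fls_exp_def)
  moreover from this have "?B \<noteq> 0"
    by auto
  moreover have "fls_nth (fls_exp c) 0 = 1"
    by (simp add: fls_exp_def)
  ultimately show ?thesis
    using fls_times_base[of "fls_exp c" "inverse ?B"] fls_inverse_base[of ?B]
    by (auto simp: exp_pole_residue_def divide_inverse)
qed

lemma exp_pole_residue_recurrence:
  "c * exp_pole_residue D (Suc k) c = of_nat (Suc k) * D * exp_pole_residue D (Suc (Suc k)) (c - D)"
proof -
  define W where "W = inverse (1 - fls_exp (- D))"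
  have "fls_deriv W = - fls_const D * fls_exp (- D) * W\<^sup>2"
    by (simp add: W_def fls_inverse_deriv fls_deriv_fls_exp)
  then have "fls_deriv (W ^ Suc k) = - (of_nat (Suc k) * fls_const D) * fls_exp (- D) * W ^ Suc (Suc k)"
    by (simp only: fls_deriv_power diff_Suc_1) (simp add: power2_eq_square algebra_simps)
  then have "fls_deriv (fls_exp c * W ^ Suc k) =
      fls_const c * (fls_exp c * W ^ Suc k)
      - of_nat (Suc k) * fls_const D * (fls_exp (c - D) * W ^ Suc (Suc k))"
    by (simp only: fls_deriv_mult fls_deriv_fls_exp)
       (simp add: fls_exp_add[of c "- D", simplified] algebra_simps)
  then show ?thesis
    using fls_deriv_residue[of "fls_exp c * W ^ Suc k"]
    by (simp add: exp_pole_residue_def W_def fls_of_nat mult.assoc)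
qed

lemma exp_pole_residue_closed_form:
  assumes "D \<noteq> 0"
  shows "exp_pole_residue D (Suc m) c = pochhammer (c / D + 1) m / (D * fact m)"
proof (induction m arbitrary: c)
  case 0
  then show ?case
    using exp_pole_residue_1[OF assms] by simp
next
  case (Suc m)
  have "of_nat (Suc m) * D * exp_pole_residue D (Suc (Suc m)) c =
      (c + D) * exp_pole_residue D (Suc m) (c + D)"
    using exp_pole_residue_recurrence[of "c + D" D m] by simp
  also have "\<dots> = (c + D) * pochhammer (c / D + 1 + 1) m / (D * fact m)"
    using Suc.IH[of "c + D"] assms by (simp add: add_divide_distrib)
  also have "\<dots> = of_nat (Suc m) * D * (pochhammer (c / D + 1) (Suc m) / (D * fact (Suc m)))"
  proof -
    have "y * P / (D * f) = s * D * (y / D * P / (D * (s * f)))" if "s \<noteq> 0" for y P f s :: 'a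
      using that assms by (simp add: field_simps)
    moreover have "c / D + 1 = (c + D) / D"
      using assms by (simp add: field_simps)
    ultimately show ?thesis
      by (simp only: pochhammer_rec fact_Suc of_nat_neq_0 not_False_eq_True)
  qed
  finally show ?case
    using assms by (subst (asm) mult_cancel_left) (simp del: of_nat_Suc)
qed

lemma fls_exp_quotient_expand:
  fixes a d M D :: nat
  assumes "d * a * M = D" "D > 0"
  shows "fps_to_fls (1 + fps_exp (- of_nat a)) / fps_to_fls (1 - fps_exp (- of_nat (d * a))) =
    (\<Sum>e\<in>{0, 1}. \<Sum>j\<in>{0..<M}. fls_exp (- of_nat (a * (d * j + e))))
      * inverse (1 - fls_exp (- of_nat D) :: 'a::field_char_0 fls)"
proof -
  define q :: "'a fls" where "q = fls_exp (- of_nat (d * a))"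
  define S where "S = (\<Sum>j\<in>{0..<M}. q ^ j)"
  have "q ^ M = fls_exp (- of_nat D)"
    by (simp add: q_def fls_exp_power algebra_simps flip: assms(1))
  then have B: "1 - fls_exp (- of_nat D) = (1 - q) * S"
    unfolding S_def atLeast0LessThan one_diff_power_eq[symmetric] by simp
  have "1 - fls_exp (- of_nat D) \<noteq> (0 :: 'a fls)"
    using fls_subdegree_one_minus_fls_exp[of "of_nat D :: 'a"] assms(2) by auto
  then have "S \<noteq> 0"
    unfolding B by auto
  have q0: "q ^ j = fls_exp (- of_nat (a * (d * j + 0)))" for j
    by (simp add: q_def fls_exp_power algebra_simps)
  have q1: "fls_exp (- of_nat a) * q ^ j = fls_exp (- of_nat (a * (d * j + 1)))" for j
    by (simp add: q_def fls_exp_power algebra_simps flip: fls_exp_add)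
  have "(1 + fls_exp (- of_nat a)) * S =
      (\<Sum>j\<in>{0..<M}. q ^ j) + (\<Sum>j\<in>{0..<M}. fls_exp (- of_nat a) * q ^ j)"
    by (simp add: S_def distrib_right sum_distrib_left sum.distrib)
  also have "\<dots> = (\<Sum>e\<in>{0, 1}. \<Sum>j\<in>{0..<M}. fls_exp (- of_nat (a * (d * j + e))))"
    unfolding q1 unfolding q0 by (simp add: algebra_simps)
  finally have "(1 + fls_exp (- of_nat a)) * S =
      (\<Sum>e\<in>{0, 1}. \<Sum>j\<in>{0..<M}. fls_exp (- of_nat (a * (d * j + e))))" .
  moreover have "fps_to_fls (1 + fps_exp (- of_nat a)) / fps_to_fls (1 - fps_exp (- of_nat (d * a)))
      = (1 + fls_exp (- of_nat a)) * S / ((1 - q) * S)"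
    using \<open>S \<noteq> 0\<close> by (simp add: q_def fls_exp_def)
  ultimately show ?thesis
    by (simp only: B divide_inverse)
qed

lemma polypart_eq_sum_exp_pole_residue:
  assumes "D > 0" and dvd: "\<And>i. i < r \<Longrightarrow> d * a i dvd D"
  shows "polypart r a d x =
    (\<Sum>\<epsilon>\<in>PiE {..<r} (\<lambda>_. {0, 1}). \<Sum>j\<in>PiE {..<r} (\<lambda>i. {0..<D div (d * a i)}).
      exp_pole_residue (real D) r (x - real (\<Sum>i<r. a i * (d * j i + \<epsilon> i))))"
proof -
  define M where "M i = D div (d * a i)" for i
  define W where "W = inverse (1 - fls_exp (- real D))"
  define E where "E = PiE {..<r} (\<lambda>_. {0, 1::nat})"
  define J where "J = PiE {..<r} (\<lambda>i. {0..<M i})"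
  define s where "s \<epsilon> j = (\<Sum>i<r. a i * (d * j i + \<epsilon> i))" for \<epsilon> j
  have "fps_to_fls (1 + fps_exp (- real (a i))) / fps_to_fls (1 - fps_exp (- real (d * a i)))
      = (\<Sum>e\<in>{0, 1}. \<Sum>j\<in>{0..<M i}. fls_exp (- real (a i * (d * j + e)))) * W" if "i < r" for i
  proof -
    have "d * a i * M i = D"
      using dvd[OF that] by (simp add: M_def)
    from fls_exp_quotient_expand[OF this \<open>D > 0\<close>] show ?thesis
      by (simp only: W_def)
  qed
  then have "(\<Prod>i<r. fps_to_fls (1 + fps_exp (- real (a i))) / fps_to_fls (1 - fps_exp (- real (d * a i))))
      = (\<Prod>i<r. (\<Sum>e\<in>{0, 1}. \<Sum>j\<in>{0..<M i}. fls_exp (- real (a i * (d * j + e)))) * W)"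
    by simp
  also have "\<dots> = (\<Prod>i<r. \<Sum>e\<in>{0, 1}. \<Sum>j\<in>{0..<M i}. fls_exp (- real (a i * (d * j + e)))) * W ^ r"
    by (simp only: prod.distrib prod_constant card_lessThan)
  also have "\<dots> = (\<Sum>\<epsilon>\<in>E. \<Prod>i<r. \<Sum>j\<in>{0..<M i}. fls_exp (- real (a i * (d * j + \<epsilon> i)))) * W ^ r"
    unfolding E_def by (subst prod_sum_PiE) auto
  also have "\<dots> = (\<Sum>\<epsilon>\<in>E. \<Sum>j\<in>J. \<Prod>i<r. fls_exp (- real (a i * (d * j i + \<epsilon> i)))) * W ^ r"
    unfolding J_def by (subst prod_sum_PiE) auto
  also have "\<dots> = (\<Sum>\<epsilon>\<in>E. \<Sum>j\<in>J. fls_exp (- real (s \<epsilon> j))) * W ^ r"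
    by (simp add: fls_exp_sum s_def sum_negf)
  finally have factors: "(\<Prod>i<r. fps_to_fls (1 + fps_exp (- real (a i))) / fps_to_fls (1 - fps_exp (- real (d * a i))))
      = (\<Sum>\<epsilon>\<in>E. \<Sum>j\<in>J. fls_exp (- real (s \<epsilon> j))) * W ^ r" .
  have "polypart r a d x = fls_nth (fls_exp x * ((\<Sum>\<epsilon>\<in>E. \<Sum>j\<in>J. fls_exp (- real (s \<epsilon> j))) * W ^ r)) (-1)"
    unfolding polypart_def factors fls_exp_def ..
  also have "\<dots> = (\<Sum>\<epsilon>\<in>E. \<Sum>j\<in>J. fls_nth (fls_exp (x - real (s \<epsilon> j)) * W ^ r) (-1))"
  proof -
    have shift: "fls_exp x * (fls_exp (- y) * W ^ r) = fls_exp (x - y) * W ^ r" for y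
      using fls_exp_add[of x "- y"] by (simp add: mult.assoc)
    show ?thesis
      by (simp only: sum_distrib_left sum_distrib_right fls_nth_sum shift)
  qed
  finally show ?thesis
    by (simp add: exp_pole_residue_def W_def E_def J_def M_def s_def)
qed

section \<open>Counting by mixed-radix digits\<close>

lemma card_nat_tuples_with_sum:
  "card {q \<in> PiE {..<r} (\<lambda>_. UNIV :: nat set). sum q {..<r} = m} = (m + r - 1) choose m"
proof -
  have "bij_betw (\<lambda>q. map q [0..<r]) {q \<in> PiE {..<r} (\<lambda>_. UNIV). sum q {..<r} = m}
      {xs. length xs = r \<and> sum_list xs = m}"
    by (rule bij_betw_byWitness[where f' = "\<lambda>xs. restrict (nth xs) {..<r}"])
       (auto simp: PiE_def extensional_def fun_eq_iff lessThan_atLeast0 sum_list_sum_nth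
         simp flip: sum_set_upt_conv_sum_list_nat intro!: nth_equalityI)
  then show ?thesis
    by (simp add: bij_betw_same_card card_length_sum_list)
qed

lemma of_nat_binomial_eq_pochhammer:
  "of_nat ((m + k) choose m) = pochhammer (of_nat m + 1) k / (fact k :: 'a::field_char_0)"
proof -
  have "(m + k) choose m = (m + k) choose k"
    by (simp add: binomial_symmetric[of m "m + k"])
  then show ?thesis
    by (simp add: binomial_gbinomial gbinomial_pochhammer')
qed

lemma card_nat_tuples_with_int_sum:
  assumes "r \<ge> 1" and "z > - int r"
  shows "real (card {q \<in> PiE {..<r} (\<lambda>_. UNIV :: nat set). int (sum q {..<r}) = z}) =
    pochhammer (of_int z + 1) (r - 1) / fact (r - 1)"
proof (cases "z \<ge> 0")
  case True
  then obtain m where z: "z = int m"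
    by (metis nonneg_eq_int)
  have "m + r - 1 = m + (r - 1)"
    using assms(1) by simp
  then show ?thesis
    using card_nat_tuples_with_sum[of r m] of_nat_binomial_eq_pochhammer[of m "r - 1"]
    by (simp add: z del: of_nat_sum)
next
  case False
  then have "int (sum q {..<r}) \<noteq> z" for q :: "nat \<Rightarrow> nat"
    by linarith
  then have empty: "{q \<in> PiE {..<r} (\<lambda>_. UNIV :: nat set). int (sum q {..<r}) = z} = {}"
    by blast
  have vanish: "pochhammer (of_int z + 1) (r - 1) = (0 :: real)"
    using assms False by (auto simp: pochhammer_eq_0_iff intro!: exI[of _ "nat (- z - 1)"])
  show ?thesis
    unfolding empty vanish by simp
qed

lemma card_nat_tuples_with_shifted_sum:
  assumes "r \<ge> 1" and "D > 0" and "s < r * D"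
  shows "real (card {q \<in> PiE {..<r} (\<lambda>_. UNIV :: nat set). D * sum q {..<r} + s = n}) =
    (if [s = n] (mod D) then pochhammer ((real n - real s) / real D + 1) (r - 1) / fact (r - 1) else 0)"
proof (cases "[s = n] (mod D)")
  case True
  then obtain z where z: "int n = int s + int D * z"
    unfolding cong_int_iff[symmetric] cong_iff_lin by blast
  have "int s < int D * int r"
    using assms(3) by (metis mult.commute of_nat_less_iff of_nat_mult)
  then have "0 < int D * (z + int r)"
    unfolding distrib_left using z by linarith
  then have "z > - int r"
    using assms(2) by (simp add: zero_less_mult_iff)
  moreover have "D * x + s = n \<longleftrightarrow> int x = z" for x
  proof -
    have "D * x + s = n \<longleftrightarrow> int D * int x + int s = int n"
      by (metis of_nat_add of_nat_eq_iff of_nat_mult)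
    then show ?thesis
      using z assms(2) by simp
  qed
  moreover have "(real n - real s) / real D = of_int z"
  proof -
    have "real n = real s + real D * of_int z"
      using arg_cong[OF z, of real_of_int] by simp
    then show ?thesis
      using assms(2) by (simp add: field_simps)
  qed
  ultimately show ?thesis
    using True card_nat_tuples_with_int_sum[OF assms(1)] by simp
next
  case False
  have "D * x + s \<noteq> n" for x
  proof
    assume "D * x + s = n"
    then have "[s = n] (mod D)"
      by (simp add: cong_def flip: \<open>D * x + s = n\<close>)
    with False show False ..
  qed
  with False show ?thesis
    by simp
qed

lemma mixed_radix_digits:
  fixes d M e j q :: nat
  assumes "e < d" and "j < M"
  shows "(d * (M * q + j) + e) mod d = e"
    and "(d * (M * q + j) + e) div d mod M = j"
    and "(d * (M * q + j) + e) div d div M = q"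
proof -
  have "(d * (M * q + j) + e) div d = M * q + j"
    using assms by simp
  then show "(d * (M * q + j) + e) mod d = e" "(d * (M * q + j) + e) div d mod M = j"
    "(d * (M * q + j) + e) div d div M = q"
    using assms by simp_all
qed

lemma weighted_sum_mixed_radix:
  fixes a M q j e :: "nat \<Rightarrow> nat"
  assumes "\<And>i. i < r \<Longrightarrow> d * a i * M i = D"
  shows "(\<Sum>i<r. a i * (d * (M i * q i + j i) + e i)) =
    D * sum q {..<r} + (\<Sum>i<r. a i * (d * j i + e i))"
proof -
  have "a i * (d * (M i * q i + j i) + e i) = D * q i + a i * (d * j i + e i)" if "i < r" for i
  proof -
    have "a i * (d * (M i * q i + j i) + e i) = d * a i * M i * q i + a i * (d * j i + e i)"
      by (simp add: algebra_simps)
    then show ?thesis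
      unfolding assms[OF that] .
  qed
  then have "(\<Sum>i<r. a i * (d * (M i * q i + j i) + e i)) = (\<Sum>i<r. D * q i + a i * (d * j i + e i))"
    by (intro sum.cong) auto
  then show ?thesis
    by (simp add: sum.distrib sum_distrib_left)
qed

lemma weighted_sum_digits_less:
  fixes a M j \<epsilon> :: "nat \<Rightarrow> nat"
  assumes "d \<ge> 2" and "r \<ge> 1" and "D > 0" and DM: "\<And>i. i < r \<Longrightarrow> d * a i * M i = D"
    and "\<epsilon> \<in> PiE {..<r} (\<lambda>_. {0, 1})" and "j \<in> PiE {..<r} (\<lambda>i. {0..<M i})"
  shows "(\<Sum>i<r. a i * (d * j i + \<epsilon> i)) < r * D"
proof -
  have "a i * (d * j i + \<epsilon> i) < D" if "i < r" for i
  proof -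
    have "\<epsilon> i \<le> 1" "j i < M i"
      using assms(5,6) that by (force simp: PiE_iff)+
    then have "d * j i + \<epsilon> i < d * (j i + 1)"
      using assms(1) by simp
    also have "\<dots> \<le> d * M i"
      using \<open>j i < M i\<close> by (intro mult_le_mono2) simp
    finally have "d * j i + \<epsilon> i < d * M i" .
    moreover have "a i > 0"
      using DM[OF that] \<open>D > 0\<close> by (cases "a i") auto
    ultimately have "a i * (d * j i + \<epsilon> i) < a i * (d * M i)"
      by simp
    also have "\<dots> = D"
      using DM[OF that] by (simp add: mult_ac)
    finally show ?thesis .
  qed
  then have "(\<Sum>i<r. a i * (d * j i + \<epsilon> i)) < (\<Sum>i<r. D)"
    using \<open>r \<ge> 1\<close> by (intro sum_strict_mono) (auto simp: lessThan_empty_iff)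
  then show ?thesis
    by simp
qed

lemma pad_eq_sum_card:
  fixes M :: "nat \<Rightarrow> nat"
  assumes "d \<ge> 2" and "D > 0" and DM: "\<And>i. i < r \<Longrightarrow> d * a i * M i = D"
  shows "pad r a d n =
    (\<Sum>\<epsilon>\<in>PiE {..<r} (\<lambda>_. {0, 1}). \<Sum>j\<in>PiE {..<r} (\<lambda>i. {0..<M i}).
      card {q \<in> PiE {..<r} (\<lambda>_. UNIV :: nat set). D * sum q {..<r} + (\<Sum>i<r. a i * (d * j i + \<epsilon> i)) = n})"
proof -
  define E where "E = PiE {..<r} (\<lambda>_. {0, 1::nat})"
  define J where "J = PiE {..<r} (\<lambda>i. {0..<M i})"
  define Q where "Q \<epsilon> j = {q \<in> PiE {..<r} (\<lambda>_. UNIV :: nat set).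
    D * sum q {..<r} + (\<Sum>i<r. a i * (d * j i + \<epsilon> i)) = n}" for \<epsilon> j :: "nat \<Rightarrow> nat"
  define S where "S = {x \<in> PiE {..<r} (\<lambda>_. UNIV :: nat set).
    (\<Sum>i<r. a i * x i) = n \<and> (\<forall>i<r. x i mod d = 0 \<or> x i mod d = 1)}"
  define digits where "digits x = (restrict (\<lambda>i. x i mod d) {..<r},
    restrict (\<lambda>i. x i div d mod M i) {..<r}, restrict (\<lambda>i. x i div d div M i) {..<r})"
    for x :: "nat \<Rightarrow> nat"
  define combine where "combine = (\<lambda>(\<epsilon>, j, q). restrict (\<lambda>i. d * (M i * q i + j i) + \<epsilon> i) {..<r})"
  have M_pos: "M i > 0" if "i < r" for i
    using DM[OF that] \<open>D > 0\<close> by (cases "M i") auto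
  have weight: "(\<Sum>i<r. a i * (d * (M i * q i + j i) + e i)) =
      D * sum q {..<r} + (\<Sum>i<r. a i * (d * j i + e i))" for q j e
    by (rule weighted_sum_mixed_radix) (rule DM)
  have bij: "bij_betw digits S (SIGMA \<epsilon>:E. SIGMA j:J. Q \<epsilon> j)"
  proof (rule bij_betw_byWitness[where f' = combine])
    show "\<forall>x\<in>S. combine (digits x) = x"
      by (auto simp: S_def digits_def combine_def PiE_def extensional_def fun_eq_iff)
    show "\<forall>t\<in>(SIGMA \<epsilon>:E. SIGMA j:J. Q \<epsilon> j). digits (combine t) = t"
    proof safe
      fix \<epsilon> j q
      assume "\<epsilon> \<in> E" "j \<in> J" "q \<in> Q \<epsilon> j"
      then have "\<epsilon> i < d" "j i < M i" if "i < r" for i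
        using that \<open>d \<ge> 2\<close> by (force simp: E_def J_def PiE_iff)+
      with \<open>\<epsilon> \<in> E\<close> \<open>j \<in> J\<close> \<open>q \<in> Q \<epsilon> j\<close> show "digits (combine (\<epsilon>, j, q)) = (\<epsilon>, j, q)"
        by (auto simp: digits_def combine_def E_def J_def Q_def mixed_radix_digits PiE_def
            extensional_def fun_eq_iff)
    qed
    show "digits ` S \<subseteq> (SIGMA \<epsilon>:E. SIGMA j:J. Q \<epsilon> j)"
    proof (rule image_subsetI)
      fix x
      assume "x \<in> S"
      then have "n = D * (\<Sum>i<r. x i div d div M i) + (\<Sum>i<r. a i * (d * (x i div d mod M i) + x i mod d))"
        using weight[of "\<lambda>i. x i div d div M i" "\<lambda>i. x i div d mod M i" "\<lambda>i. x i mod d"]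
        by (simp add: S_def)
      then have "restrict (\<lambda>i. x i div d div M i) {..<r} \<in>
          Q (restrict (\<lambda>i. x i mod d) {..<r}) (restrict (\<lambda>i. x i div d mod M i) {..<r})"
        by (simp add: Q_def)
      moreover have "restrict (\<lambda>i. x i mod d) {..<r} \<in> E"
        using \<open>x \<in> S\<close> by (auto simp: S_def E_def)
      moreover have "restrict (\<lambda>i. x i div d mod M i) {..<r} \<in> J"
        using M_pos by (auto simp: J_def)
      ultimately show "digits x \<in> (SIGMA \<epsilon>:E. SIGMA j:J. Q \<epsilon> j)"
        by (simp add: digits_def)
    qed
    show "combine ` (SIGMA \<epsilon>:E. SIGMA j:J. Q \<epsilon> j) \<subseteq> S"
    proof safe
      fix \<epsilon> j q
      assume "\<epsilon> \<in> E" "j \<in> J" "q \<in> Q \<epsilon> j"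
      then have "\<epsilon> i \<le> 1" "\<epsilon> i < d" "j i < M i" if "i < r" for i
        using that \<open>d \<ge> 2\<close> by (force simp: E_def J_def PiE_iff)+
      with \<open>q \<in> Q \<epsilon> j\<close> show "combine (\<epsilon>, j, q) \<in> S"
        using weight[of q j \<epsilon>]
        by (auto simp: combine_def S_def Q_def mixed_radix_digits le_Suc_eq)
    qed
  qed
  have "finite (Q \<epsilon> j)" for \<epsilon> j
  proof (rule finite_subset)
    show "Q \<epsilon> j \<subseteq> PiE {..<r} (\<lambda>_. {..n})"
    proof
      fix q
      assume q: "q \<in> Q \<epsilon> j"
      have "q i \<le> n" if "i < r" for i
      proof -
        have "q i \<le> sum q {..<r}"
          using that by (intro member_le_sum) auto
        also have "\<dots> \<le> D * sum q {..<r}"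
          using \<open>D > 0\<close> by simp
        finally show ?thesis
          using q by (auto simp: Q_def)
      qed
      with q show "q \<in> PiE {..<r} (\<lambda>_. {..n})"
        by (auto simp: Q_def PiE_iff)
    qed
  qed (simp add: finite_PiE)
  then have "card (SIGMA \<epsilon>:E. SIGMA j:J. Q \<epsilon> j) = (\<Sum>\<epsilon>\<in>E. \<Sum>j\<in>J. card (Q \<epsilon> j))"
    by (simp add: card_SigmaI E_def J_def finite_PiE)
  moreover have "pad r a d n = card S"
    by (simp add: pad_def S_def)
  ultimately show ?thesis
    using bij_betw_same_card[OF bij] by (simp only: E_def J_def Q_def)
qed

lemma prod_shifted_eq_pochhammer:
  "(\<Prod>l=1..k. x + of_nat l) = pochhammer (x + 1) k"
  by (induction k) (simp_all add: pochhammer_Suc algebra_simps)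

lemma polypart_formula:
  assumes "r \<ge> 1" and "D > 0" and "\<And>i. i < r \<Longrightarrow> d * a i dvd D"
  shows "polypart r a d x = 1 / (real D * fact (r - 1)) *
    (\<Sum>\<epsilon>\<in>PiE {..<r} (\<lambda>_. {0, 1}). \<Sum>j\<in>PiE {..<r} (\<lambda>i. {0..<D div (d * a i)}).
      \<Prod>l=1..r-1. (x - real (\<Sum>i<r. a i * (d * j i + \<epsilon> i))) / real D + real l)"
proof -
  have "exp_pole_residue (real D) r c = 1 / (real D * fact (r - 1)) * (\<Prod>l=1..r-1. c / real D + real l)" for c
    unfolding prod_shifted_eq_pochhammer using exp_pole_residue_closed_form[of "real D" "r - 1" c] assms(1,2) by simp
  then show ?thesis
    by (simp add: polypart_eq_sum_exp_pole_residue[OF assms(2,3)] sum_distrib_left)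
qed

lemma pad_formula:
  assumes "r \<ge> 1" and "d \<ge> 2" and "D > 0" and dvd: "\<And>i. i < r \<Longrightarrow> d * a i dvd D"
  shows "real (pad r a d n) = 1 / fact (r - 1) *
    (\<Sum>\<epsilon>\<in>PiE {..<r} (\<lambda>_. {0, 1}).
      \<Sum>j\<in>{j \<in> PiE {..<r} (\<lambda>i. {0..<D div (d * a i)}). [(\<Sum>i<r. a i * (d * j i + \<epsilon> i)) = n] (mod D)}.
        \<Prod>l=1..r-1. (real n - real (\<Sum>i<r. a i * (d * j i + \<epsilon> i))) / real D + real l)"
proof -
  define M where "M i = D div (d * a i)" for i
  define E where "E = PiE {..<r} (\<lambda>_. {0, 1::nat})"
  define J where "J = PiE {..<r} (\<lambda>i. {0..<M i})"
  define s where "s \<epsilon> j = (\<Sum>i<r. a i * (d * j i + \<epsilon> i))" for \<epsilon> j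
  have DM: "d * a i * M i = D" if "i < r" for i
    using dvd[OF that] by (simp add: M_def)
  have "real (pad r a d n) = (\<Sum>\<epsilon>\<in>E. \<Sum>j\<in>J.
      real (card {q \<in> PiE {..<r} (\<lambda>_. UNIV). D * sum q {..<r} + s \<epsilon> j = n}))"
    by (simp add: pad_eq_sum_card[OF assms(2,3) DM] E_def J_def s_def)
  also have "\<dots> = (\<Sum>\<epsilon>\<in>E. \<Sum>j\<in>J. if [s \<epsilon> j = n] (mod D)
      then pochhammer ((real n - real (s \<epsilon> j)) / real D + 1) (r - 1) / fact (r - 1) else 0)"
    using weighted_sum_digits_less[OF assms(2,1,3) DM]
    by (intro sum.cong refl card_nat_tuples_with_shifted_sum[OF assms(1,3)]) (simp_all add: E_def J_def s_def)
  also have "\<dots> = (\<Sum>\<epsilon>\<in>E. \<Sum>j\<in>{j \<in> J. [s \<epsilon> j = n] (mod D)}.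
      pochhammer ((real n - real (s \<epsilon> j)) / real D + 1) (r - 1) / fact (r - 1))"
    by (simp add: sum.inter_filter J_def finite_PiE cong: if_cong)
  also have "\<dots> = 1 / fact (r - 1) * (\<Sum>\<epsilon>\<in>E. \<Sum>j\<in>{j \<in> J. [s \<epsilon> j = n] (mod D)}.
      pochhammer ((real n - real (s \<epsilon> j)) / real D + 1) (r - 1))"
    by (simp add: sum_distrib_left)
  finally show ?thesis
    by (simp only: prod_shifted_eq_pochhammer E_def J_def M_def s_def)
qed

theorem theorem2p3:
  fixes r d :: nat and a :: "nat \<Rightarrow> nat"
  assumes "r \<ge> 2" and "d \<ge> 2" and "\<And>i. i < r \<Longrightarrow> a i > 0"
  shows "(\<forall>n::nat. real (pad r a d n) =
           1 / fact (r - 1) *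
           (\<Sum>\<epsilon>\<in>PiE {..<r} (\<lambda>_. {0, 1::nat}).
             \<Sum>j\<in>{j \<in> PiE {..<r} (\<lambda>i. {0..<Dd r a d div (d * a i)}).
                    [(\<Sum>i<r. a i * (d * j i + \<epsilon> i)) = n] (mod Dd r a d)}.
               \<Prod>l=1..r-1. (real n - real (\<Sum>i<r. a i * (d * j i + \<epsilon> i))) / real (Dd r a d)
                             + real l))
       \<and> (\<forall>x::real. polypart r a d x =
           1 / (real (Dd r a d) * fact (r - 1)) *
           (\<Sum>\<epsilon>\<in>PiE {..<r} (\<lambda>_. {0, 1::nat}).
             \<Sum>j\<in>PiE {..<r} (\<lambda>i. {0..<Dd r a d div (d * a i)}).
               \<Prod>l=1..r-1. (x - real (\<Sum>i<r. a i * (d * j i + \<epsilon> i))) / real (Dd r a d)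
                             + real l))"
proof -
  have dvd: "d * a i dvd Dd r a d" if "i < r" for i
    using that by (auto simp: Dd_def intro: dvd_Lcm)
  have "0 \<notin> (\<lambda>i. d * a i) ` {..<r}"
    using assms(2,3) by fastforce
  then have "Dd r a d > 0"
    unfolding Dd_def by (subst zero_less_iff_neq_zero, subst Lcm_0_iff) auto
  with assms dvd show ?thesis
    using pad_formula polypart_formula by simp
qed

end
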